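(* Assume the standing setup below. Let $x\in X$ and let $1\le i\le j\le k$ be such that $(s_i,[x]_{s_i,X})\to(s_j,[x]_{s_j,X})$ is a layer of $X$. Suppose that either $y\in[x]_{s_i,Y}$ or $y\notin[x]_{s_j,Y}$. Then $[x]_{s_i,Y}=[x]_{s_j,Y}$ (so this edge is a partial layer for $Y$), and for any phase change numbers $s\le s_i$ and $t\ge s_j$ of $Y$ with $[x]_{s,Y}=[x]_{t,Y}$ (in particular for the layer $(s,[x]_{s,Y})\to(t,[x]_{t,Y})$ of $Y$ containing this edge) one has $s_{i-1}<s\le s_i$ and $s_j\le t<s_{j+1}$.
   Context: For a finite set $Z\subset\mathbb{R}^n$ and a real number $s\ge 0$, the Vietoris–Rips complex $V_s(Z)$ is the simplicial complex with vertex set $Z$ whose simplices are the nonempty subsets $\sigma\subseteq Z$ with $d(z,z')\le s$ for all $z,z'\in\sigma$ ($d$ the Euclidean distance). For $z\in Z$, $[z]_{s,Z}\subseteq Z$ denotes the set of vertices of the path component of $V_s(Z)$ containing $z$; for $s\le t$, $[z]_{s,Z}\subseteq[z]_{t,Z}$. The phase change numbers of $Z$ are the distinct values of $d(z,z')$, $z,z'\in Z$. A partial layer for $Z$ is an edge $(s,[z]_{s,Z})\to(t,[z]_{t,Z})$ with $s\le t$ and $[z]_{s,Z}=[z]_{t,Z}$ as subsets of $Z$. A layer of $Z$ is a partial layer $(s,[z]_{s,Z})\to(t,[z]_{t,Z})$ such that $s,t$ are phase change numbers of $Z$ and which is maximal: there are no phase change numbers $s'\le s$, $t'\ge t$ of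 $Z$ with $(s',t')\ne(s,t)$ and $[z]_{s',Z}=[z]_{t',Z}$. Standing setup: $X\subset\mathbb{R}^n$ is a finite set with at least two points, $y\in\mathbb{R}^n\setminus X$, $Y=X\sqcup\{y\}$. The phase change numbers of $X$ are $0=s_0<s_1<\dots<s_k$; set $s_{k+1}=+\infty$. There are $x_0\in X$ and a real $r>0$ with $d(y,x_0)<r$ and $r<s_{i+1}-s_i$ for all $0\le i<k$. *)

theory Defs
  imports "HOL-Analysis.Analysis"
begin

text \<open>Edge relation of the 1-skeleton of the Vietoris-Rips complex V_s(Z).\<close>
definition vr_edge :: "real \<Rightarrow> 'a::metric_space set \<Rightarrow> 'a \<Rightarrow> 'a \<Rightarrow> bool" where
  "vr_edge s Z u v \<longleftrightarrow> u \<in> Z \<and> v \<in> Z \<and> dist u v \<le> s"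

definition vr_comp :: "real \<Rightarrow> 'a::metric_space set \<Rightarrow> 'a \<Rightarrow> 'a set" where
  "vr_comp s Z z = {w. (vr_edge s Z)\<^sup>*\<^sup>* z w}"

definition pcn :: "'a::metric_space set \<Rightarrow> real set" where
  "pcn Z = {dist z z' | z z'. z \<in> Z \<and> z' \<in> Z}"

definition is_layer :: "'a::metric_space set \<Rightarrow> 'a \<Rightarrow> real \<Rightarrow> real \<Rightarrow> bool" where
  "is_layer Z z s t \<longleftrightarrow>
     s \<in> pcn Z \<and> t \<in> pcn Z \<and> s \<le> t \<and> vr_comp s Z z = vr_comp t Z z \<and>
     \<not> (\<exists>s' t'. s' \<in> pcn Z \<and> t' \<in> pcn Z \<and> s' \<le> s \<and> t \<le> t' \<and> (s', t') \<noteq> (s, t)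
                \<and> vr_comp s' Z z = vr_comp t' Z z)"

end

theory Submission
  imports Defs
begin

text \<open>Since y lies within r of x0 and consecutive phase change numbers of X are more than r
apart, a point of X within s_l of y is already within s_l of x0. Hence every path of V_{s_l}(Y)
that passes through y can be rerouted through x0, and the components of V_{s_l}(Y) and
V_{s_l}(X) containing x have the same points in X. A layer of X therefore stays a partial layer
of Y unless y joins the component strictly between s_i and s_j, and a longer layer of Y through
it would yield, on tracing back to X, a longer layer of X.\<close>

lemma vr_comp_mono_scale: "a \<le> b \<Longrightarrow> vr_comp a Z x \<subseteq> vr_comp b Z x"
  unfolding vr_comp_def
  by (auto elim!: rtranclp_mono[THEN predicate2D, rotated] simp: vr_edge_def)

lemma vr_comp_mono_set: "Z \<subseteq> Z' \<Longrightarrow> vr_comp a Z x \<subseteq> vr_comp a Z' x"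
  unfolding vr_comp_def
  by (auto elim!: rtranclp_mono[THEN predicate2D, rotated] simp: vr_edge_def)

lemma vr_comp_subset: "vr_comp a Z x \<subseteq> insert x Z"
proof
  fix w assume "w \<in> vr_comp a Z x"
  then have "(vr_edge a Z)\<^sup>*\<^sup>* x w" by (simp add: vr_comp_def)
  then show "w \<in> insert x Z"
    by (induction rule: rtranclp_induct) (auto simp: vr_edge_def)
qed

lemma vr_comp_eq_between:
  assumes "s' \<le> a" "a \<le> b" "b \<le> t'" "vr_comp s' Z x = vr_comp t' Z x"
  shows "vr_comp a Z x = vr_comp b Z x"
  using vr_comp_mono_scale[of s' a Z x] vr_comp_mono_scale[of a b Z x]
    vr_comp_mono_scale[of b t' Z x] assms by blast

lemma is_layer_maximal:
  assumes "is_layer Z z a b" "a' \<in> pcn Z" "b' \<in> pcn Z" "a' \<le> a" "b \<le> b'"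
    and "vr_comp a' Z z = vr_comp b' Z z"
  shows "a' = a \<and> b' = b"
  using assms unfolding is_layer_def by blast

lemma vr_comp_insert_inter:
  assumes "y \<notin> X" "x \<in> X" "x0 \<in> X"
    and near: "\<And>b. b \<in> X \<Longrightarrow> dist b y \<le> t \<Longrightarrow> dist b x0 \<le> t"
  shows "vr_comp t (insert y X) x \<inter> X = vr_comp t X x"
proof
  show "vr_comp t X x \<subseteq> vr_comp t (insert y X) x \<inter> X"
    using vr_comp_mono_set[of X "insert y X" t x] vr_comp_subset[of t X x] \<open>x \<in> X\<close> by auto
next
  let ?R = "(vr_edge t X)\<^sup>*\<^sup>* x"
  have "w \<in> X \<and> ?R w \<or> w = y \<and> ?R x0" if "(vr_edge t (insert y X))\<^sup>*\<^sup>* x w" for w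
    using that
  proof (induction rule: rtranclp_induct)
    case base
    then show ?case using \<open>x \<in> X\<close> by simp
  next
    case (step w v)
    then have "w \<in> insert y X" "v \<in> insert y X" "dist w v \<le> t"
      by (auto simp: vr_edge_def)
    with step.IH near \<open>x0 \<in> X\<close> \<open>y \<notin> X\<close> show ?case
      by (auto simp: vr_edge_def dist_commute intro: rtranclp.rtrancl_into_rtrancl)
  qed
  then show "vr_comp t (insert y X) x \<inter> X \<subseteq> vr_comp t X x"
    unfolding vr_comp_def using \<open>y \<notin> X\<close> by blast
qed

lemma vr_comp_insert_eq:
  assumes "a \<le> b" "x \<in> X"
    and "vr_comp a (insert y X) x \<inter> X = vr_comp a X x"
    and "vr_comp b (insert y X) x \<inter> X = vr_comp b X x"
    and "vr_comp a X x = vr_comp b X x"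
    and "y \<in> vr_comp a (insert y X) x \<or> y \<notin> vr_comp b (insert y X) x"
  shows "vr_comp a (insert y X) x = vr_comp b (insert y X) x"
proof -
  have "vr_comp a (insert y X) x \<subseteq> vr_comp b (insert y X) x"
    using vr_comp_mono_scale[OF \<open>a \<le> b\<close>] .
  moreover have "vr_comp b (insert y X) x \<subseteq> insert y X"
    using vr_comp_subset[of b "insert y X" x] \<open>x \<in> X\<close> by auto
  ultimately show ?thesis using assms by blast
qed

locale rips_one_point_extension =
  fixes X :: "'a::metric_space set" and y x0 :: 'a and s :: "nat \<Rightarrow> real" and k :: nat
    and r :: real
  assumes y_notin: "y \<notin> X"
    and s_strict_mono: "strict_mono_on {0..k} s" and s_pcn: "s ` {0..k} = pcn X"
    and x0_in: "x0 \<in> X" and y_near_x0: "dist y x0 < r"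
    and gaps: "\<forall>l<k. r < s (Suc l) - s l"
begin

lemma s_mono: "p \<le> q \<Longrightarrow> q \<le> k \<Longrightarrow> s p \<le> s q"
  using strict_mono_on_leD[OF s_strict_mono] by simp

lemma s_in_pcn: "l \<le> k \<Longrightarrow> s l \<in> pcn X"
  using s_pcn by auto

lemma pcn_gap:
  assumes "d \<in> pcn X" "l \<le> k" "d < s l + r"
  shows "d \<le> s l"
proof -
  obtain m where m: "m \<le> k" "d = s m" using assms(1) s_pcn by (metis atLeastAtMost_iff imageE)
  show ?thesis
  proof (cases "m \<le> l")
    case True
    then show ?thesis using m s_mono assms(2) by simp
  next
    case False
    then have "s (Suc l) \<le> s m" "r < s (Suc l) - s l"
      using m s_mono gaps by auto
    then show ?thesis using m assms(3) by linarith
  qed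
qed

lemma near_y_imp_near_x0:
  assumes "b \<in> X" "l \<le> k" "dist b y \<le> s l"
  shows "dist b x0 \<le> s l"
proof (rule pcn_gap)
  show "dist b x0 \<in> pcn X" using \<open>b \<in> X\<close> x0_in unfolding pcn_def by blast
  show "dist b x0 < s l + r"
    using dist_triangle[of b x0 y] y_near_x0 assms(3) by linarith
qed (fact \<open>l \<le> k\<close>)

lemma trace_vr_comp:
  "x \<in> X \<Longrightarrow> l \<le> k \<Longrightarrow> vr_comp (s l) (insert y X) x \<inter> X = vr_comp (s l) X x"
  using vr_comp_insert_inter[OF y_notin _ x0_in near_y_imp_near_x0] by blast

lemma trace_vr_comp_eq:
  assumes "x \<in> X" "p \<le> k" "q \<le> k"
    and "vr_comp (s p) (insert y X) x = vr_comp (s q) (insert y X) x"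
  shows "vr_comp (s p) X x = vr_comp (s q) X x"
  using trace_vr_comp[OF \<open>x \<in> X\<close> \<open>p \<le> k\<close>] trace_vr_comp[OF \<open>x \<in> X\<close> \<open>q \<le> k\<close>] assms(4)
  by simp

lemma layer_bounds:
  assumes "x \<in> X" "1 \<le> i" "i \<le> j" "j \<le> k" and layer: "is_layer X x (s i) (s j)"
    and "s' \<le> s i" "s j \<le> t'"
    and eq: "vr_comp s' (insert y X) x = vr_comp t' (insert y X) x"
  shows "s (i - 1) < s'" and "j < k \<Longrightarrow> t' < s (Suc j)"
proof -
  have maximal: "p \<le> k \<Longrightarrow> q \<le> k \<Longrightarrow> s p \<le> s i \<Longrightarrow> s j \<le> s q
      \<Longrightarrow> vr_comp (s p) X x = vr_comp (s q) X x \<Longrightarrow> s p = s i \<and> s q = s j" for p q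
    using is_layer_maximal[OF layer s_in_pcn s_in_pcn] by blast
  show "s (i - 1) < s'"
  proof (rule ccontr)
    assume "\<not> s (i - 1) < s'"
    then have "s' \<le> s (i - 1)" by simp
    then have "vr_comp (s (i - 1)) (insert y X) x = vr_comp (s j) (insert y X) x"
      by (rule vr_comp_eq_between[OF _ s_mono \<open>s j \<le> t'\<close> eq]) (use assms in auto)
    then have "vr_comp (s (i - 1)) X x = vr_comp (s j) X x"
      by (rule trace_vr_comp_eq[OF \<open>x \<in> X\<close>, rotated 2]) (use assms in auto)
    then have "s (i - 1) = s i"
      using maximal[of "i - 1" j] s_mono[of "i - 1" i] assms by auto
    then have "i = i - 1"
      by (rule strict_mono_on_eqD[OF s_strict_mono]) (use assms in auto)
    then show False using \<open>1 \<le> i\<close> by simp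
  qed
  assume "j < k"
  show "t' < s (Suc j)"
  proof (rule ccontr)
    assume "\<not> t' < s (Suc j)"
    then have "s (Suc j) \<le> t'" by simp
    then have "vr_comp (s i) (insert y X) x = vr_comp (s (Suc j)) (insert y X) x"
      by (rule vr_comp_eq_between[OF \<open>s' \<le> s i\<close> s_mono _ eq, rotated 2])
        (use assms \<open>j < k\<close> in auto)
    then have "vr_comp (s i) X x = vr_comp (s (Suc j)) X x"
      by (rule trace_vr_comp_eq[OF \<open>x \<in> X\<close>, rotated 2]) (use assms \<open>j < k\<close> in auto)
    then have "s (Suc j) = s j"
      using maximal[of i "Suc j"] s_mono[of j "Suc j"] assms \<open>j < k\<close> by auto
    then have "j = Suc j"
      by (rule strict_mono_on_eqD[OF s_strict_mono]) (use \<open>j < k\<close> in auto)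
    then show False by simp
  qed
qed

end

theorem proposition15:
  fixes X :: "'a::euclidean_space set" and y x x0 :: 'a
    and s :: "nat \<Rightarrow> real" and k i j :: nat and r :: real
  assumes "finite X" and "card X \<ge> 2"
    and "y \<notin> X"
    and "strict_mono_on {0..k} s" and "s ` {0..k} = pcn X"
    and "x0 \<in> X" and "r > 0" and "dist y x0 < r"
    and "\<forall>l<k. r < s (Suc l) - s l"
    and "x \<in> X" and "1 \<le> i" and "i \<le> j" and "j \<le> k"
    and "is_layer X x (s i) (s j)"
    and "y \<in> vr_comp (s i) (insert y X) x \<or> y \<notin> vr_comp (s j) (insert y X) x"
  shows "vr_comp (s i) (insert y X) x = vr_comp (s j) (insert y X) x \<and>
         (\<forall>s' t'. s' \<in> pcn (insert y X) \<and> t' \<in> pcn (insert y X) \<and> s' \<le> s i \<and> s j \<le> t'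
             \<and> vr_comp s' (insert y X) x = vr_comp t' (insert y X) x
           \<longrightarrow> s (i - 1) < s' \<and> s' \<le> s i \<and> s j \<le> t' \<and> (j < k \<longrightarrow> t' < s (Suc j)))"
proof -
  interpret rips_one_point_extension X y x0 s k r
    using assms by unfold_locales
  have "vr_comp (s i) X x = vr_comp (s j) X x"
    using \<open>is_layer X x (s i) (s j)\<close> unfolding is_layer_def by blast
  then have "vr_comp (s i) (insert y X) x = vr_comp (s j) (insert y X) x"
    using vr_comp_insert_eq[OF s_mono \<open>x \<in> X\<close> trace_vr_comp trace_vr_comp] assms by simp
  then show ?thesis
    using layer_bounds[OF \<open>x \<in> X\<close> \<open>1 \<le> i\<close> \<open>i \<le> j\<close> \<open>j \<le> k\<close>] assms by blast
qed

end
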